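(* Let $\nu,a,b\in\mathbb{R}$ with $a+\nu>b+\nu>0$. Let $f:(b,a)\to\mathbb{R}$ be a smooth decreasing function, and suppose there is $\hat u\in(b,a)$ with $f(\hat u)=f'(\hat u)=f''(\hat u)=0$, and that $f'''(u)<0$ for all $b<u<a$. Define $q$ on $(b,a)^3$ by $$q(u_1,u_2,u_3)=\frac{1}{2\sqrt2\,\pi}\int_{-1}^1\int_{-1}^1\frac{f\big(\tfrac{1+\mu}{2}\tfrac{1+\tau}{2}u_1+\tfrac{1+\mu}{2}\tfrac{1-\tau}{2}u_2+\tfrac{1-\mu}{2}u_3\big)}{\sqrt{(1-\mu)(1-\tau^2)}}\,d\mu\,d\tau.$$ Then $$\frac{\partial^3 q}{\partial u_i\partial u_j\partial u_k}<0\quad\text{for all }i,j,k\in\{1,2,3\}.$$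
   Context: Here $f$ is the inverse function of a decreasing initial profile $u_0(x)$ with $u_0(-\infty)=a$ and $u_0(+\infty)=b$. *)

theory Defs
  imports "HOL-Analysis.Analysis"
begin

text \<open>The function q of the paper, with u = (u1,u2,u3) a vector in R^3.
  The (improper, but absolutely convergent) double integral is written as an
  iterated Henstock-Kurzweil integral: inner in mu, outer in tau.\<close>
definition qfun :: "(real \<Rightarrow> real) \<Rightarrow> real^3 \<Rightarrow> real" where
  "qfun f u = 1 / (2 * sqrt 2 * pi) *
     integral {-1..1} (\<lambda>\<tau>. integral {-1..1} (\<lambda>\<mu>.
       f ((1+\<mu>)/2 * ((1+\<tau>)/2) * u$1 + (1+\<mu>)/2 * ((1-\<tau>)/2) * u$2 + (1-\<mu>)/2 * u$3)
       / sqrt ((1-\<mu>) * (1-\<tau>^2))))"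

definition has_partial :: "(real^3 \<Rightarrow> real) \<Rightarrow> 3 \<Rightarrow> real^3 \<Rightarrow> real \<Rightarrow> bool" where
  "has_partial g i x D \<longleftrightarrow> ((\<lambda>t. g (x + t *\<^sub>R axis i 1)) has_real_derivative D) (at 0)"

definition partial :: "3 \<Rightarrow> (real^3 \<Rightarrow> real) \<Rightarrow> real^3 \<Rightarrow> real" where
  "partial i g x = deriv (\<lambda>t. g (x + t *\<^sub>R axis i 1)) 0"

end

theory Submission
  imports Defs
begin

text \<open>Write mix \<mu> \<tau> u for the convex combination of u1, u2, u3 in the argument of f, so that
  q(u) = c \<integral>\<integral> f(mix \<mu> \<tau> u) \<rho>(\<mu>) \<sigma>(\<tau>) d\<mu> d\<tau> with \<rho>(\<mu>) = 1/sqrt(1-\<mu>), \<sigma>(\<tau>) = 1/sqrt(1-\<tau>^2) and c > 0.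
  As mix is linear in u with weights W_k = mix \<mu> \<tau> e_k in [0,1], differentiating three times under
  the integral sign gives \<partial>_i \<partial>_j \<partial>_k q = c \<integral>\<integral> W_i W_j W_k f'''(mix \<mu> \<tau> u) \<rho>(\<mu>) \<sigma>(\<tau>) d\<mu> d\<tau>.
  This integrand is nowhere positive and is negative at \<mu> = \<tau> = 0, where all weights are positive, so
  the integral is negative.

  The weights \<rho> and \<sigma> are unbounded but integrable, so an integral against them is bounded by the
  supremum of the integrand. Differentiation under the integral sign therefore only needs the
  difference quotients of each derivative of f to converge uniformly on compact subintervals of
  (b, a), which follows from the mean value theorem and uniform continuity of the next derivative.\<close>

section \<open>Integrals against a nonnegative weight on [-1, 1]\<close>

lemma weighted_integrable_on:
  fixes w h :: "real \<Rightarrow> real"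
  assumes "(w has_integral R) {-1..1}" "\<And>x. x \<in> {-1..1} \<Longrightarrow> 0 \<le> w x" "continuous_on {-1..1} h"
  shows "(\<lambda>x. h x * w x) integrable_on {-1..1}"
proof -
  have "(\<lambda>x. h x * w x) absolutely_integrable_on {-1..1}"
  proof (rule absolutely_integrable_bounded_measurable_product_real)
    show "h \<in> borel_measurable (lebesgue_on {-1..1})"
      using assms(3) by (intro continuous_imp_measurable_on_sets_lebesgue) auto
    show "bounded (h ` {-1..1})"
      using assms(3) by (intro compact_imp_bounded compact_continuous_image) auto
    show "w absolutely_integrable_on {-1..1}"
      using assms(1,2) by (intro nonnegative_absolutely_integrable_1) auto
  qed auto
  then show ?thesis by (simp add: absolutely_integrable_on_def)
qed

lemma abs_weighted_integral_le:
  fixes w h :: "real \<Rightarrow> real"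
  assumes w: "(w has_integral R) {-1..1}" "\<And>x. x \<in> {-1..1} \<Longrightarrow> 0 \<le> w x"
    and h: "continuous_on {-1..1} h" "\<And>x. x \<in> {-1..1} \<Longrightarrow> \<bar>h x\<bar> \<le> B"
  shows "\<bar>integral {-1..1} (\<lambda>x. h x * w x)\<bar> \<le> B * R"
proof -
  have "norm (integral {-1..1} (\<lambda>x. h x * w x)) \<le> integral {-1..1} (\<lambda>x. B * w x)"
  proof (rule integral_norm_bound_integral)
    show "(\<lambda>x. h x * w x) integrable_on {-1..1}" by (rule weighted_integrable_on[OF w h(1)])
    show "(\<lambda>x. B * w x) integrable_on {-1..1}" using has_integral_mult_right[OF w(1)] by blast
    fix x :: real assume "x \<in> {-1..1}"
    then show "norm (h x * w x) \<le> B * w x"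
      using w(2) h(2) by (simp add: abs_mult mult_right_mono)
  qed
  also have "\<dots> = B * R" using has_integral_mult_right[OF w(1)] by (rule integral_unique)
  finally show ?thesis by simp
qed

lemma integral_neg_if_continuous_nonpos:
  fixes h :: "real \<Rightarrow> real"
  assumes "lo < hi" "continuous_on {lo..hi} h" "\<And>x. x \<in> {lo..hi} \<Longrightarrow> h x \<le> 0"
    and "x0 \<in> {lo..hi}" "h x0 < 0"
  shows "integral {lo..hi} h < 0"
proof -
  have int: "h integrable_on {lo..hi}" by (rule integrable_continuous_interval[OF assms(2)])
  have "integral {lo..hi} h \<le> 0"
    using integral_le[OF int integrable_0] assms(3) by simp
  moreover have "integral {lo..hi} h \<noteq> 0"
  proof
    assume "integral {lo..hi} h = 0"
    then have "((\<lambda>x. - h x) has_integral 0) (cbox lo hi)"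
      using has_integral_neg[OF integrable_integral[OF int]] by simp
    then have "- h x0 = 0"
      by (rule has_integral_0_cbox_imp_0[rotated 2])
        (use assms in \<open>auto intro!: continuous_intros\<close>)
    with assms(5) show False by simp
  qed
  ultimately show ?thesis by simp
qed

lemma weighted_integral_neg:
  fixes w h :: "real \<Rightarrow> real"
  assumes w: "(w has_integral R) {-1..1}" "\<And>x. x \<in> {-1..1} \<Longrightarrow> 0 \<le> w x"
      "c > 0" "\<And>x. x \<in> {-1<..<1} \<Longrightarrow> c \<le> w x"
    and h: "continuous_on {-1..1} h" "\<And>x. x \<in> {-1..1} \<Longrightarrow> h x \<le> 0" "x0 \<in> {-1..1}" "h x0 < 0"
  shows "integral {-1..1} (\<lambda>x. h x * w x) < 0"
proof -
  let ?g = "\<lambda>x. if x \<in> {-1, 1} then c * h x else h x * w x"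
  have "(?g has_integral integral {-1..1} (\<lambda>x. h x * w x)) {-1..1}"
    by (rule has_integral_spike_finite[where S="{-1,1}" and f="\<lambda>x. h x * w x"])
      (use weighted_integrable_on[OF w(1,2) h(1)] in auto)
  moreover have "((\<lambda>x. c * h x) has_integral c * integral {-1..1} h) {-1..1}"
    by (intro has_integral_mult_right integrable_integral integrable_continuous_interval h(1))
  moreover have "?g x \<le> c * h x" if "x \<in> {-1..1}" for x
    using that mult_left_mono_neg[OF w(4)[of x] h(2)[of x]] by (auto simp: mult.commute)
  ultimately have "integral {-1..1} (\<lambda>x. h x * w x) \<le> c * integral {-1..1} h"
    by (rule has_integral_le)
  also have "\<dots> < 0"
    using integral_neg_if_continuous_nonpos[OF _ h] w(3) by (simp add: mult_pos_neg)
  finally show ?thesis .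
qed

section \<open>The weighted double integral\<close>

abbreviation continuous_on_square :: "(real \<Rightarrow> real \<Rightarrow> real) \<Rightarrow> bool" where
  "continuous_on_square g \<equiv> continuous_on ({-1..1} \<times> {-1..1}) (\<lambda>z. g (fst z) (snd z))"

lemma continuous_on_square_slice:
  assumes "continuous_on_square g" "\<tau> \<in> {-1..1}"
  shows "continuous_on {-1..1} (\<lambda>\<mu>. g \<mu> \<tau>)"
  by (rule continuous_on_compose2[OF assms(1), of _ "\<lambda>\<mu>. (\<mu>, \<tau>)", simplified])
    (use assms(2) in \<open>auto intro!: continuous_intros\<close>)

lemma continuous_on_square_bounded:
  assumes "continuous_on_square P"
  obtains B where "B > 0" "\<And>\<mu> \<tau>. \<mu> \<in> {-1..1} \<Longrightarrow> \<tau> \<in> {-1..1} \<Longrightarrow> \<bar>P \<mu> \<tau>\<bar> \<le> B"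
  using compact_imp_bounded[OF compact_continuous_image[OF assms compact_Times]] that
  unfolding bounded_pos by fastforce

lemma continuous_on_weighted_integral_slice:
  fixes w :: "real \<Rightarrow> real"
  assumes w: "(w has_integral R) {-1..1}" "\<And>x. x \<in> {-1..1} \<Longrightarrow> 0 \<le> w x"
    and g: "continuous_on_square g"
  shows "continuous_on {-1..1} (\<lambda>\<tau>. integral {-1..1} (\<lambda>\<mu>. g \<mu> \<tau> * w \<mu>))"
  unfolding continuous_on_iff
proof (intro ballI allI impI)
  fix \<tau> e :: real assume \<tau>: "\<tau> \<in> {-1..1}" and "0 < e"
  have "R \<ge> 0" using has_integral_nonneg[OF w(1)] w(2) by simp
  define e' where "e' = e / (R + 1)"
  have "e' > 0" "e' * R < e"
    using \<open>0 < e\<close> \<open>R \<ge> 0\<close> by (auto simp: e'_def field_simps)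
  have "uniformly_continuous_on ({-1..1} \<times> {-1..1}) (\<lambda>z. g (fst z) (snd z))"
    using g by (intro compact_uniformly_continuous compact_Times) auto
  then obtain d where "d > 0" and d: "\<And>z z'. z \<in> {-1..1} \<times> {-1..1} \<Longrightarrow> z' \<in> {-1..1} \<times> {-1..1} \<Longrightarrow>
      dist z' z < d \<Longrightarrow> dist (g (fst z') (snd z')) (g (fst z) (snd z)) < e'"
    using \<open>e' > 0\<close> unfolding uniformly_continuous_on_def by metis
  show "\<exists>d>0. \<forall>t\<in>{-1..1}. dist t \<tau> < d \<longrightarrow>
      dist (integral {-1..1} (\<lambda>\<mu>. g \<mu> t * w \<mu>)) (integral {-1..1} (\<lambda>\<mu>. g \<mu> \<tau> * w \<mu>)) < e"
  proof (intro exI[of _ d] conjI ballI impI \<open>d > 0\<close>)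
    fix t assume t: "t \<in> {-1..1}" "dist t \<tau> < d"
    have "integral {-1..1} (\<lambda>\<mu>. g \<mu> t * w \<mu>) - integral {-1..1} (\<lambda>\<mu>. g \<mu> \<tau> * w \<mu>)
        = integral {-1..1} (\<lambda>\<mu>. (g \<mu> t - g \<mu> \<tau>) * w \<mu>)"
      using weighted_integrable_on[OF w continuous_on_square_slice[OF g t(1)]]
        weighted_integrable_on[OF w continuous_on_square_slice[OF g \<tau>]]
      by (simp add: integral_diff left_diff_distrib)
    also have "\<bar>\<dots>\<bar> \<le> e' * R"
    proof (rule abs_weighted_integral_le[OF w])
      show "continuous_on {-1..1} (\<lambda>\<mu>. g \<mu> t - g \<mu> \<tau>)"
        using continuous_on_square_slice[OF g t(1)] continuous_on_square_slice[OF g \<tau>]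
        by (intro continuous_intros)
      fix \<mu> :: real assume "\<mu> \<in> {-1..1}"
      then show "\<bar>g \<mu> t - g \<mu> \<tau>\<bar> \<le> e'"
        using d[of "(\<mu>, \<tau>)" "(\<mu>, t)"] t \<tau> by (simp add: dist_Pair_Pair dist_real_def)
    qed
    finally show "dist (integral {-1..1} (\<lambda>\<mu>. g \<mu> t * w \<mu>)) (integral {-1..1} (\<lambda>\<mu>. g \<mu> \<tau> * w \<mu>)) < e"
      using \<open>e' * R < e\<close> by (simp add: dist_real_def)
  qed
qed

text \<open>Both weights blow up at the endpoints, where they take the junk value 1 / 0 = 0; hence their
  lower bounds hold only on the open interval.\<close>

definition rho :: "real \<Rightarrow> real" where "rho \<mu> = 1 / sqrt (1 - \<mu>)"

definition sigma :: "real \<Rightarrow> real" where "sigma \<tau> = 1 / sqrt (1 - \<tau>\<^sup>2)"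

definition dint :: "(real \<Rightarrow> real \<Rightarrow> real) \<Rightarrow> real" where
  "dint g = integral {-1..1} (\<lambda>\<tau>. integral {-1..1} (\<lambda>\<mu>. g \<mu> \<tau> * rho \<mu>) * sigma \<tau>)"

lemma rho_has_integral: "(rho has_integral 2 * sqrt 2) {-1..1}"
proof -
  have "(rho has_integral (- 2 * sqrt (1 - 1) - (- 2 * sqrt (1 - (-1))))) {-1..1}"
  proof (rule fundamental_theorem_of_calculus_interior)
    fix x :: real assume "x \<in> {-1<..<1}"
    then show "((\<lambda>x. - 2 * sqrt (1 - x)) has_vector_derivative rho x) (at x)"
      unfolding has_real_derivative_iff_has_vector_derivative[symmetric] rho_def
      by (auto intro!: derivative_eq_intros simp: divide_simps)
  qed (auto intro!: continuous_intros)
  then show ?thesis by simp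
qed

lemma sigma_has_integral: "(sigma has_integral pi) {-1..1}"
proof -
  have "(sigma has_integral (arcsin 1 - arcsin (-1))) {-1..1}"
  proof (rule fundamental_theorem_of_calculus_interior)
    fix x :: real assume "x \<in> {-1<..<1}"
    then show "(arcsin has_vector_derivative sigma x) (at x)"
      using DERIV_arcsin[of x]
      by (simp add: sigma_def has_real_derivative_iff_has_vector_derivative divide_inverse)
  qed (auto intro: continuous_on_arcsin')
  then show ?thesis by simp
qed

lemma rho_nonneg: "\<mu> \<in> {-1..1} \<Longrightarrow> 0 \<le> rho \<mu>"
  by (simp add: rho_def)

lemma sigma_nonneg: "\<tau> \<in> {-1..1} \<Longrightarrow> 0 \<le> sigma \<tau>"
  by (simp add: sigma_def abs_square_le_1 abs_le_iff)

lemma rho_ge: "\<mu> \<in> {-1<..<1} \<Longrightarrow> 1 / sqrt 2 \<le> rho \<mu>"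
  unfolding rho_def by (rule frac_le) auto

lemma sigma_ge: "\<tau> \<in> {-1<..<1} \<Longrightarrow> 1 \<le> sigma \<tau>"
  unfolding sigma_def using abs_square_less_1[of \<tau>] by (auto intro: frac_le[of 1 1, simplified])

lemma integrable_dint_inner:
  "continuous_on_square g \<Longrightarrow> \<tau> \<in> {-1..1} \<Longrightarrow> (\<lambda>\<mu>. g \<mu> \<tau> * rho \<mu>) integrable_on {-1..1}"
  by (intro weighted_integrable_on[OF rho_has_integral] rho_nonneg continuous_on_square_slice)

lemma continuous_on_dint_inner:
  "continuous_on_square g \<Longrightarrow> continuous_on {-1..1} (\<lambda>\<tau>. integral {-1..1} (\<lambda>\<mu>. g \<mu> \<tau> * rho \<mu>))"
  by (intro continuous_on_weighted_integral_slice[OF rho_has_integral] rho_nonneg)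

lemma integrable_dint_outer:
  "continuous_on_square g \<Longrightarrow>
    (\<lambda>\<tau>. integral {-1..1} (\<lambda>\<mu>. g \<mu> \<tau> * rho \<mu>) * sigma \<tau>) integrable_on {-1..1}"
  by (intro weighted_integrable_on[OF sigma_has_integral] sigma_nonneg continuous_on_dint_inner)

lemma abs_dint_le:
  assumes "continuous_on_square g" "\<And>\<mu> \<tau>. \<mu> \<in> {-1..1} \<Longrightarrow> \<tau> \<in> {-1..1} \<Longrightarrow> \<bar>g \<mu> \<tau>\<bar> \<le> B"
  shows "\<bar>dint g\<bar> \<le> B * (2 * sqrt 2) * pi"
  unfolding dint_def
  by (intro abs_weighted_integral_le[OF sigma_has_integral] abs_weighted_integral_le[OF rho_has_integral]
      sigma_nonneg rho_nonneg continuous_on_dint_inner continuous_on_square_slice)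
    (use assms in auto)

lemma dint_diff:
  assumes "continuous_on_square g" "continuous_on_square h"
  shows "dint (\<lambda>\<mu> \<tau>. g \<mu> \<tau> - h \<mu> \<tau>) = dint g - dint h"
proof -
  have "integral {-1..1} (\<lambda>\<mu>. (g \<mu> \<tau> - h \<mu> \<tau>) * rho \<mu>) =
      integral {-1..1} (\<lambda>\<mu>. g \<mu> \<tau> * rho \<mu>) - integral {-1..1} (\<lambda>\<mu>. h \<mu> \<tau> * rho \<mu>)"
    if "\<tau> \<in> {-1..1}" for \<tau>
    using integrable_dint_inner[OF assms(1) that] integrable_dint_inner[OF assms(2) that]
    by (simp add: integral_diff left_diff_distrib)
  then have "dint (\<lambda>\<mu> \<tau>. g \<mu> \<tau> - h \<mu> \<tau>) = integral {-1..1} (\<lambda>\<tau>.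
      integral {-1..1} (\<lambda>\<mu>. g \<mu> \<tau> * rho \<mu>) * sigma \<tau> - integral {-1..1} (\<lambda>\<mu>. h \<mu> \<tau> * rho \<mu>) * sigma \<tau>)"
    unfolding dint_def by (intro integral_cong) (simp add: left_diff_distrib)
  then show ?thesis
    unfolding dint_def
    using integrable_dint_outer[OF assms(1)] integrable_dint_outer[OF assms(2)]
    by (simp add: integral_diff)
qed

lemma dint_cmult: "dint (\<lambda>\<mu> \<tau>. c * g \<mu> \<tau>) = c * dint g"
  by (simp add: dint_def mult.assoc)

lemma dint_neg:
  assumes "continuous_on_square g" "\<And>\<mu> \<tau>. \<mu> \<in> {-1..1} \<Longrightarrow> \<tau> \<in> {-1..1} \<Longrightarrow> g \<mu> \<tau> \<le> 0"
    and "g 0 0 < 0"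
  shows "dint g < 0"
proof -
  have inner_le: "integral {-1..1} (\<lambda>\<mu>. g \<mu> \<tau> * rho \<mu>) \<le> 0" if "\<tau> \<in> {-1..1}" for \<tau>
    using integrable_dint_inner[OF assms(1) that] assms(2) that rho_nonneg
    using integral_le[OF _ integrable_0, of "\<lambda>\<mu>. g \<mu> \<tau> * rho \<mu>" "{-1..1}"]
    by (auto simp: mult_nonpos_nonneg)
  have "integral {-1..1} (\<lambda>\<mu>. g \<mu> 0 * rho \<mu>) < 0"
    by (rule weighted_integral_neg[OF rho_has_integral, where c="1 / sqrt 2"])
      (use assms in \<open>auto intro: rho_nonneg rho_ge continuous_on_square_slice\<close>)
  then show ?thesis
    unfolding dint_def
    by (intro weighted_integral_neg[OF sigma_has_integral, where c=1])
      (use assms inner_le in \<open>auto intro: sigma_nonneg sigma_ge continuous_on_dint_inner\<close>)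
qed

definition mix :: "real \<Rightarrow> real \<Rightarrow> real^3 \<Rightarrow> real" where
  "mix \<mu> \<tau> u = (1+\<mu>)/2 * ((1+\<tau>)/2) * u$1 + (1+\<mu>)/2 * ((1-\<tau>)/2) * u$2 + (1-\<mu>)/2 * u$3"

lemma mix_add_scaleR: "mix \<mu> \<tau> (u + t *\<^sub>R v) = mix \<mu> \<tau> u + t * mix \<mu> \<tau> v"
  by (simp add: mix_def field_simps)

lemma mix_mem_convex:
  assumes "convex S" "\<And>m. u$m \<in> S" "\<mu> \<in> {-1..1}" "\<tau> \<in> {-1..1}"
  shows "mix \<mu> \<tau> u \<in> S"
proof -
  have "(\<Sum>m\<in>UNIV. mix \<mu> \<tau> (axis m 1) *\<^sub>R u$m) \<in> S"
  proof (rule convex_sum[OF _ assms(1)])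
    show "(\<Sum>m\<in>UNIV. mix \<mu> \<tau> (axis m 1)) = 1"
      by (simp add: sum_3 mix_def axis_def field_simps)
    show "0 \<le> mix \<mu> \<tau> (axis m 1)" for m
      using exhaust_3[of m] assms(3,4) by (auto simp: mix_def axis_def)
  qed (use assms(2) in auto)
  then show ?thesis by (simp add: sum_3 mix_def axis_def)
qed

lemma mix_axis_mem: "\<mu> \<in> {-1..1} \<Longrightarrow> \<tau> \<in> {-1..1} \<Longrightarrow> mix \<mu> \<tau> (axis k 1) \<in> {0..1}"
  by (rule mix_mem_convex) (auto simp: axis_def)

lemma mix_axis_center_pos: "0 < mix 0 0 (axis k 1)"
  using exhaust_3[of k] by (auto simp: mix_def axis_def)

lemma continuous_on_square_mix: "continuous_on_square (\<lambda>\<mu> \<tau>. mix \<mu> \<tau> u)"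
  unfolding mix_def by (intro continuous_intros) auto

lemma continuous_on_square_comp_mix:
  assumes "continuous_on S H" "convex S" "\<And>m. u$m \<in> S"
  shows "continuous_on_square (\<lambda>\<mu> \<tau>. H (mix \<mu> \<tau> u))"
  by (rule continuous_on_compose2[OF assms(1) continuous_on_square_mix])
    (use mix_mem_convex[OF assms(2,3)] in auto)

section \<open>Differentiation under the integral sign\<close>

lemma uniformly_differentiable_on_interval:
  fixes G G' :: "real \<Rightarrow> real"
  assumes G: "\<And>y. y \<in> {lo..hi} \<Longrightarrow> (G has_real_derivative G' y) (at y)"
    and "continuous_on {lo..hi} G'" and "\<epsilon> > 0"
  obtains d where "d > 0" and "\<And>x y. x \<in> {lo..hi} \<Longrightarrow> y \<in> {lo..hi} \<Longrightarrow> \<bar>y - x\<bar> < d \<Longrightarrow>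
    \<bar>G y - G x - (y - x) * G' x\<bar> \<le> \<bar>y - x\<bar> * \<epsilon>"
proof -
  have "uniformly_continuous_on {lo..hi} G'"
    using assms(2) by (rule compact_uniformly_continuous) simp
  then obtain d where "d > 0" and d: "\<And>x z. x \<in> {lo..hi} \<Longrightarrow> z \<in> {lo..hi} \<Longrightarrow> \<bar>z - x\<bar> < d \<Longrightarrow>
      \<bar>G' z - G' x\<bar> < \<epsilon>"
    using \<open>\<epsilon> > 0\<close> unfolding uniformly_continuous_on_def dist_real_def by metis
  have "\<bar>G y - G x - (y - x) * G' x\<bar> \<le> \<bar>y - x\<bar> * \<epsilon>"
    if x: "x \<in> {lo..hi}" and y: "y \<in> {lo..hi}" and "\<bar>y - x\<bar> < d" for x y
  proof -
    obtain z where z: "z \<in> {lo..hi}" "\<bar>z - x\<bar> \<le> \<bar>y - x\<bar>" "G y - G x = (y - x) * G' z"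
    proof (cases x y rule: linorder_cases)
      case less
      have "\<exists>z. x < z \<and> z < y \<and> G y - G x = (y - x) * G' z"
        by (rule MVT2) (use less G x y in auto)
      then obtain z where "x < z" "z < y" "G y - G x = (y - x) * G' z" by blast
      then show ?thesis using x y by (intro that[of z]) auto
    next
      case greater
      have "\<exists>z. y < z \<and> z < x \<and> G x - G y = (x - y) * G' z"
        by (rule MVT2) (use greater G x y in auto)
      then obtain z where "y < z" "z < x" "G x - G y = (x - y) * G' z" by blast
      then show ?thesis using x y by (intro that[of z]) (auto simp: algebra_simps)
    qed (use x that in auto)
    have "\<bar>G y - G x - (y - x) * G' x\<bar> = \<bar>y - x\<bar> * \<bar>G' z - G' x\<bar>"
      by (simp add: z(3) abs_mult[symmetric] algebra_simps)
    also have "\<dots> \<le> \<bar>y - x\<bar> * \<epsilon>"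
      using d[OF x z(1)] z(2) \<open>\<bar>y - x\<bar> < d\<close> by (intro mult_left_mono) auto
    finally show ?thesis .
  qed
  with \<open>d > 0\<close> show ?thesis using that by blast
qed

lemma abs_mix_remainder_le:
  fixes G G' :: "real \<Rightarrow> real"
  assumes d: "\<And>x y. x \<in> {lo..hi} \<Longrightarrow> y \<in> {lo..hi} \<Longrightarrow> \<bar>y - x\<bar> < d \<Longrightarrow>
      \<bar>G y - G x - (y - x) * G' x\<bar> \<le> \<bar>y - x\<bar> * \<epsilon>"
    and "\<epsilon> \<ge> 0" and "\<bar>t\<bar> < d"
    and "\<And>m. u$m \<in> {lo..hi}" "\<And>m. (u + t *\<^sub>R axis k 1)$m \<in> {lo..hi}"
    and \<mu>\<tau>: "\<mu> \<in> {-1..1}" "\<tau> \<in> {-1..1}"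
  shows "\<bar>G (mix \<mu> \<tau> (u + t *\<^sub>R axis k 1)) - G (mix \<mu> \<tau> u) - t * mix \<mu> \<tau> (axis k 1) * G' (mix \<mu> \<tau> u)\<bar>
    \<le> \<bar>t\<bar> * \<epsilon>"
proof -
  let ?x = "mix \<mu> \<tau> u" and ?w = "mix \<mu> \<tau> (axis k 1)"
  have w: "0 \<le> ?w" "?w \<le> 1" using mix_axis_mem[OF \<mu>\<tau>] by auto
  have "?x \<in> {lo..hi}" "?x + t * ?w \<in> {lo..hi}"
    using mix_mem_convex[OF _ assms(4) \<mu>\<tau>] mix_mem_convex[OF _ assms(5) \<mu>\<tau>]
    by (auto simp: mix_add_scaleR simp del: atLeastAtMost_iff)
  moreover have "\<bar>t\<bar> * ?w < d" using \<open>\<bar>t\<bar> < d\<close> w mult_left_le[of ?w "\<bar>t\<bar>"] by auto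
  ultimately have "\<bar>G (?x + t * ?w) - G ?x - t * ?w * G' ?x\<bar> \<le> \<bar>t\<bar> * ?w * \<epsilon>"
    using d[of ?x "?x + t * ?w"] w by (simp add: abs_mult)
  also have "\<dots> \<le> \<bar>t\<bar> * \<epsilon>"
    using w \<open>\<epsilon> \<ge> 0\<close> by (simp add: mult_left_le mult_right_mono)
  finally show ?thesis by (simp add: mix_add_scaleR)
qed

lemma abs_dint_mix_increment_le:
  fixes G G' :: "real \<Rightarrow> real"
  assumes G: "continuous_on {lo..hi} G" and G': "continuous_on {lo..hi} G'"
    and d: "\<And>x y. x \<in> {lo..hi} \<Longrightarrow> y \<in> {lo..hi} \<Longrightarrow> \<bar>y - x\<bar> < d \<Longrightarrow>
      \<bar>G y - G x - (y - x) * G' x\<bar> \<le> \<bar>y - x\<bar> * \<epsilon>"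
    and "\<epsilon> \<ge> 0" and "\<bar>t\<bar> < d"
    and u: "\<And>m. u$m \<in> {lo..hi}" "\<And>m. (u + t *\<^sub>R axis k 1)$m \<in> {lo..hi}"
    and P: "continuous_on_square P" "\<And>\<mu> \<tau>. \<mu> \<in> {-1..1} \<Longrightarrow> \<tau> \<in> {-1..1} \<Longrightarrow> \<bar>P \<mu> \<tau>\<bar> \<le> B"
  shows "\<bar>dint (\<lambda>\<mu> \<tau>. P \<mu> \<tau> * G (mix \<mu> \<tau> (u + t *\<^sub>R axis k 1))) - dint (\<lambda>\<mu> \<tau>. P \<mu> \<tau> * G (mix \<mu> \<tau> u))
      - t * dint (\<lambda>\<mu> \<tau>. P \<mu> \<tau> * mix \<mu> \<tau> (axis k 1) * G' (mix \<mu> \<tau> u))\<bar> \<le> B * (\<bar>t\<bar> * \<epsilon>) * (2 * sqrt 2) * pi"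
proof -
  define R where "R = (\<lambda>\<mu> \<tau>. (P \<mu> \<tau> * G (mix \<mu> \<tau> (u + t *\<^sub>R axis k 1)) - P \<mu> \<tau> * G (mix \<mu> \<tau> u))
      - t * (P \<mu> \<tau> * mix \<mu> \<tau> (axis k 1) * G' (mix \<mu> \<tau> u)))"
  have cont_Gt: "continuous_on_square (\<lambda>\<mu> \<tau>. P \<mu> \<tau> * G (mix \<mu> \<tau> (u + t *\<^sub>R axis k 1)))"
    and cont_G0: "continuous_on_square (\<lambda>\<mu> \<tau>. P \<mu> \<tau> * G (mix \<mu> \<tau> u))"
    and cont_G': "continuous_on_square (\<lambda>\<mu> \<tau>. t * (P \<mu> \<tau> * mix \<mu> \<tau> (axis k 1) * G' (mix \<mu> \<tau> u)))"
    using u by (intro continuous_intros P(1) continuous_on_square_mix continuous_on_square_comp_mix[OF G]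
        continuous_on_square_comp_mix[OF G']; simp)+
  have "\<bar>R \<mu> \<tau>\<bar> \<le> B * (\<bar>t\<bar> * \<epsilon>)" if "\<mu> \<in> {-1..1}" "\<tau> \<in> {-1..1}" for \<mu> \<tau>
  proof -
    have "R \<mu> \<tau> = P \<mu> \<tau> * (G (mix \<mu> \<tau> (u + t *\<^sub>R axis k 1)) - G (mix \<mu> \<tau> u)
        - t * mix \<mu> \<tau> (axis k 1) * G' (mix \<mu> \<tau> u))"
      by (simp add: R_def algebra_simps)
    then show ?thesis
      using abs_mix_remainder_le[OF d \<open>\<epsilon> \<ge> 0\<close> \<open>\<bar>t\<bar> < d\<close> u that] P(2)[OF that]
      by (simp add: abs_mult mult_mono)
  qed
  then have "\<bar>dint R\<bar> \<le> B * (\<bar>t\<bar> * \<epsilon>) * (2 * sqrt 2) * pi"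
    unfolding R_def by (intro abs_dint_le continuous_on_diff cont_Gt cont_G0 cont_G') (simp add: R_def)
  moreover have "dint R = dint (\<lambda>\<mu> \<tau>. P \<mu> \<tau> * G (mix \<mu> \<tau> (u + t *\<^sub>R axis k 1)))
      - dint (\<lambda>\<mu> \<tau>. P \<mu> \<tau> * G (mix \<mu> \<tau> u)) - t * dint (\<lambda>\<mu> \<tau>. P \<mu> \<tau> * mix \<mu> \<tau> (axis k 1) * G' (mix \<mu> \<tau> u))"
    using dint_diff[OF continuous_on_diff[OF cont_Gt cont_G0] cont_G'] dint_diff[OF cont_Gt cont_G0]
    by (simp add: R_def dint_cmult)
  ultimately show ?thesis by simp
qed

lemma has_real_derivative_dint_mix:
  fixes G G' :: "real \<Rightarrow> real"
  assumes G: "\<And>y. y \<in> {lo..hi} \<Longrightarrow> (G has_real_derivative G' y) (at y)"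
    and G': "continuous_on {lo..hi} G'" and P: "continuous_on_square P"
    and "\<delta> > 0" and u: "\<And>m. u$m \<in> {lo+\<delta>..hi-\<delta>}"
  shows "((\<lambda>t. dint (\<lambda>\<mu> \<tau>. P \<mu> \<tau> * G (mix \<mu> \<tau> (u + t *\<^sub>R axis k 1)))) has_real_derivative
      dint (\<lambda>\<mu> \<tau>. P \<mu> \<tau> * mix \<mu> \<tau> (axis k 1) * G' (mix \<mu> \<tau> u))) (at 0)"
proof -
  define F where "F t = dint (\<lambda>\<mu> \<tau>. P \<mu> \<tau> * G (mix \<mu> \<tau> (u + t *\<^sub>R axis k 1)))" for t
  define D where "D = dint (\<lambda>\<mu> \<tau>. P \<mu> \<tau> * mix \<mu> \<tau> (axis k 1) * G' (mix \<mu> \<tau> u))"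
  have "continuous_on {lo..hi} G"
    by (rule continuous_at_imp_continuous_on) (use G DERIV_isCont in blast)
  obtain B where "B > 0" and B: "\<And>\<mu> \<tau>. \<mu> \<in> {-1..1} \<Longrightarrow> \<tau> \<in> {-1..1} \<Longrightarrow> \<bar>P \<mu> \<tau>\<bar> \<le> B"
    using continuous_on_square_bounded[OF P] by blast
  have "\<exists>d>0. \<forall>t. \<bar>t\<bar> < d \<longrightarrow> \<bar>F t - F 0 - t * D\<bar> \<le> e * \<bar>t\<bar>" if "e > 0" for e
  proof -
    define \<epsilon> where "\<epsilon> = e / (B * (2 * sqrt 2) * pi)"
    have "\<epsilon> > 0" using \<open>e > 0\<close> \<open>B > 0\<close> by (simp add: \<epsilon>_def)
    obtain d where "d > 0" and d: "\<And>x y. x \<in> {lo..hi} \<Longrightarrow> y \<in> {lo..hi} \<Longrightarrow> \<bar>y - x\<bar> < d \<Longrightarrow>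
        \<bar>G y - G x - (y - x) * G' x\<bar> \<le> \<bar>y - x\<bar> * \<epsilon>"
      using uniformly_differentiable_on_interval[OF G G' \<open>\<epsilon> > 0\<close>] by blast
    have "\<bar>F t - F 0 - t * D\<bar> \<le> e * \<bar>t\<bar>" if t: "\<bar>t\<bar> < min \<delta> d" for t
    proof -
      have "u$m \<in> {lo..hi}" "(u + t *\<^sub>R axis k 1)$m \<in> {lo..hi}" for m
        using u[of m] t \<open>\<delta> > 0\<close> by (auto simp: axis_def)
      then have "\<bar>F t - F 0 - t * D\<bar> \<le> B * (\<bar>t\<bar> * \<epsilon>) * (2 * sqrt 2) * pi"
        unfolding F_def D_def scaleR_zero_left add.right_neutral using t \<open>\<epsilon> > 0\<close>
        by (intro abs_dint_mix_increment_le[OF \<open>continuous_on {lo..hi} G\<close> G' d _ _ _ _ P B]) auto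
      also have "\<dots> = e * \<bar>t\<bar>" using \<open>B > 0\<close> by (simp add: \<epsilon>_def)
      finally show ?thesis .
    qed
    then show ?thesis using \<open>d > 0\<close> \<open>\<delta> > 0\<close> by (intro exI[of _ "min \<delta> d"]) auto
  qed
  then have "(F has_real_derivative D) (at 0)"
    unfolding has_field_derivative_def has_derivative_at_alt
    by (auto simp: mult.commute intro: bounded_linear_mult_right)
  then show ?thesis unfolding F_def[abs_def] D_def .
qed

lemma coordinates_margin:
  fixes u :: "real^'n"
  assumes "\<And>m. u$m \<in> {b<..<a}"
  obtains \<delta> where "\<delta> > 0" "\<And>m. u$m \<in> {b + 2 * \<delta>..a - 2 * \<delta>}"
proof -
  define \<delta> where "\<delta> = Min (range (\<lambda>m. min (u$m - b) (a - u$m))) / 2"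
  have "Min (range (\<lambda>m. min (u$m - b) (a - u$m))) \<in> range (\<lambda>m. min (u$m - b) (a - u$m))"
    by (intro Min_in) auto
  then have "\<delta> > 0" using assms by (auto simp: \<delta>_def)
  moreover have "u$m \<in> {b + 2 * \<delta>..a - 2 * \<delta>}" for m
    using Min_le[of "range (\<lambda>m. min (u$m - b) (a - u$m))" "min (u$m - b) (a - u$m)"]
    by (auto simp: \<delta>_def)
  ultimately show ?thesis using that by blast
qed

lemma partial_eqI: "has_partial g i x D \<Longrightarrow> partial i g x = D"
  unfolding has_partial_def partial_def by (rule DERIV_imp_deriv)

lemma has_partial_dint_mix:
  fixes \<Phi> :: "real^3 \<Rightarrow> real" and G G' :: "real \<Rightarrow> real"
  assumes G: "\<And>y. y \<in> {b<..<a} \<Longrightarrow> (G has_real_derivative G' y) (at y)"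
    and G': "continuous_on {b<..<a} G'" and P: "continuous_on_square P"
    and \<Phi>: "\<And>w. (\<And>m. w$m \<in> {b<..<a}) \<Longrightarrow> \<Phi> w = dint (\<lambda>\<mu> \<tau>. P \<mu> \<tau> * G (mix \<mu> \<tau> w))"
    and v: "\<And>m. v$m \<in> {b<..<a}"
  shows "has_partial \<Phi> j v (dint (\<lambda>\<mu> \<tau>. P \<mu> \<tau> * mix \<mu> \<tau> (axis j 1) * G' (mix \<mu> \<tau> v)))"
proof -
  obtain \<delta> where "\<delta> > 0" and \<delta>: "\<And>m. v$m \<in> {b + 2 * \<delta>..a - 2 * \<delta>}"
    using coordinates_margin[OF v] by blast
  have "((\<lambda>t. dint (\<lambda>\<mu> \<tau>. P \<mu> \<tau> * G (mix \<mu> \<tau> (v + t *\<^sub>R axis j 1)))) has_real_derivative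
      dint (\<lambda>\<mu> \<tau>. P \<mu> \<tau> * mix \<mu> \<tau> (axis j 1) * G' (mix \<mu> \<tau> v))) (at 0)"
  proof (rule has_real_derivative_dint_mix[OF _ _ P \<open>\<delta> > 0\<close>])
    show "(G has_real_derivative G' y) (at y)" if "y \<in> {b + \<delta>..a - \<delta>}" for y
      using G that \<open>\<delta> > 0\<close> by auto
    show "continuous_on {b + \<delta>..a - \<delta>} G'"
      by (rule continuous_on_subset[OF G']) (use \<open>\<delta> > 0\<close> in auto)
    show "v$m \<in> {b + \<delta> + \<delta>..a - \<delta> - \<delta>}" for m
      using \<delta>[of m] by auto
  qed
  then show ?thesis
    unfolding has_partial_def
  proof (rule has_field_derivative_transform_within_open[where S="ball 0 \<delta>"])
    fix t :: real assume "t \<in> ball 0 \<delta>"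
    then have "(v + t *\<^sub>R axis j 1)$m \<in> {b<..<a}" for m
      using \<delta>[of m] \<open>\<delta> > 0\<close> by (auto simp: axis_def)
    then show "dint (\<lambda>\<mu> \<tau>. P \<mu> \<tau> * G (mix \<mu> \<tau> (v + t *\<^sub>R axis j 1))) = \<Phi> (v + t *\<^sub>R axis j 1)"
      by (simp add: \<Phi>)
  qed (use \<open>\<delta> > 0\<close> in auto)
qed

lemma qfun_eq_dint: "qfun f u = dint (\<lambda>\<mu> \<tau>. 1 / (2 * sqrt 2 * pi) * f (mix \<mu> \<tau> u))"
proof -
  have "integral {-1..1} (\<lambda>\<mu>. f ((1+\<mu>)/2 * ((1+\<tau>)/2) * u$1 + (1+\<mu>)/2 * ((1-\<tau>)/2) * u$2 + (1-\<mu>)/2 * u$3)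
       / sqrt ((1-\<mu>) * (1-\<tau>^2))) = integral {-1..1} (\<lambda>\<mu>. f (mix \<mu> \<tau> u) * rho \<mu>) * sigma \<tau>" for \<tau>
    unfolding integral_mult_left[symmetric]
    by (intro integral_cong) (simp add: mix_def rho_def sigma_def real_sqrt_mult)
  then show ?thesis
    by (simp add: qfun_def dint_def mult.assoc integral_mult_right)
qed

lemma dint_mix_axis_neg:
  assumes "c > 0" and H: "continuous_on {b<..<a} H" "\<And>y. y \<in> {b<..<a} \<Longrightarrow> H y < 0"
    and x: "\<And>m. x$m \<in> {b<..<a}"
  shows "dint (\<lambda>\<mu> \<tau>. c * mix \<mu> \<tau> (axis k 1) * mix \<mu> \<tau> (axis j 1) * mix \<mu> \<tau> (axis i 1) * H (mix \<mu> \<tau> x)) < 0"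
proof (rule dint_neg)
  have H_neg: "H (mix \<mu> \<tau> x) < 0" if "\<mu> \<in> {-1..1}" "\<tau> \<in> {-1..1}" for \<mu> \<tau>
    using H(2) mix_mem_convex[OF _ x that] by simp
  show "continuous_on_square
      (\<lambda>\<mu> \<tau>. c * mix \<mu> \<tau> (axis k 1) * mix \<mu> \<tau> (axis j 1) * mix \<mu> \<tau> (axis i 1) * H (mix \<mu> \<tau> x))"
    by (intro continuous_intros continuous_on_square_mix continuous_on_square_comp_mix[OF H(1) _ x]) simp
  show "c * mix \<mu> \<tau> (axis k 1) * mix \<mu> \<tau> (axis j 1) * mix \<mu> \<tau> (axis i 1) * H (mix \<mu> \<tau> x) \<le> 0"
    if "\<mu> \<in> {-1..1}" "\<tau> \<in> {-1..1}" for \<mu> \<tau>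
    using mix_axis_mem[OF that, of k] mix_axis_mem[OF that, of j] mix_axis_mem[OF that, of i]
      H_neg[OF that] \<open>c > 0\<close>
    by (simp add: mult_nonneg_nonpos)
  show "c * mix 0 0 (axis k 1) * mix 0 0 (axis j 1) * mix 0 0 (axis i 1) * H (mix 0 0 x) < 0"
    using mix_axis_center_pos[of k] mix_axis_center_pos[of j] mix_axis_center_pos[of i]
      H_neg[of 0 0] \<open>c > 0\<close>
    by (simp add: mult_pos_neg)
qed

lemma qfun_partials:
  fixes f :: "real \<Rightarrow> real"
  assumes smooth: "\<And>n y. y \<in> {b<..<a} \<Longrightarrow> ((deriv ^^ n) f) differentiable (at y)"
  defines "c \<equiv> 1 / (2 * sqrt 2 * pi)" and "W k \<mu> \<tau> \<equiv> mix \<mu> \<tau> (axis k 1)"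
  shows "(\<And>m. x$m \<in> {b<..<a}) \<Longrightarrow>
      has_partial (qfun f) k x (dint (\<lambda>\<mu> \<tau>. c * W k \<mu> \<tau> * (deriv ^^ 1) f (mix \<mu> \<tau> x)))"
    and "(\<And>m. x$m \<in> {b<..<a}) \<Longrightarrow> has_partial (partial k (qfun f)) j x
      (dint (\<lambda>\<mu> \<tau>. c * W k \<mu> \<tau> * W j \<mu> \<tau> * (deriv ^^ 2) f (mix \<mu> \<tau> x)))"
    and "(\<And>m. x$m \<in> {b<..<a}) \<Longrightarrow> has_partial (partial j (partial k (qfun f))) i x
      (dint (\<lambda>\<mu> \<tau>. c * W k \<mu> \<tau> * W j \<mu> \<tau> * W i \<mu> \<tau> * (deriv ^^ 3) f (mix \<mu> \<tau> x)))"
proof -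
  have f_deriv: "((deriv ^^ n) f has_real_derivative (deriv ^^ Suc n) f y) (at y)" if "y \<in> {b<..<a}" for n y
    using smooth[OF that, of n] by (simp add: DERIV_deriv_iff_real_differentiable)
  have f_cont: "continuous_on {b<..<a} ((deriv ^^ n) f)" for n
    by (rule continuous_at_imp_continuous_on) (use f_deriv DERIV_isCont in blast)
  have step: "has_partial \<Phi> j x (dint (\<lambda>\<mu> \<tau>. P \<mu> \<tau> * W j \<mu> \<tau> * (deriv ^^ Suc n) f (mix \<mu> \<tau> x)))"
    if "continuous_on_square P"
      and "\<And>w. (\<And>m. w$m \<in> {b<..<a}) \<Longrightarrow> \<Phi> w = dint (\<lambda>\<mu> \<tau>. P \<mu> \<tau> * (deriv ^^ n) f (mix \<mu> \<tau> w))"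
      and "\<And>m. x$m \<in> {b<..<a}" for P \<Phi> x j n
    unfolding W_def by (rule has_partial_dint_mix[OF f_deriv f_cont that])
  have cont_W: "continuous_on_square (\<lambda>\<mu> \<tau>. c * W k \<mu> \<tau>)"
    "continuous_on_square (\<lambda>\<mu> \<tau>. c * W k \<mu> \<tau> * W j \<mu> \<tau>)" for k j
    unfolding W_def by (intro continuous_intros continuous_on_square_mix)+
  show d1: "has_partial (qfun f) k x (dint (\<lambda>\<mu> \<tau>. c * W k \<mu> \<tau> * (deriv ^^ 1) f (mix \<mu> \<tau> x)))"
    if "\<And>m. x$m \<in> {b<..<a}" for x k
    using step[where P="\<lambda>_ _. c" and \<Phi>="qfun f" and j=k and n=0] qfun_eq_dint[of f, folded c_def] that
    by simp
  show d2: "has_partial (partial k (qfun f)) j x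
      (dint (\<lambda>\<mu> \<tau>. c * W k \<mu> \<tau> * W j \<mu> \<tau> * (deriv ^^ 2) f (mix \<mu> \<tau> x)))"
    if "\<And>m. x$m \<in> {b<..<a}" for x j k
    using step[where P="\<lambda>\<mu> \<tau>. c * W k \<mu> \<tau>" and \<Phi>="partial k (qfun f)" and n=1]
      cont_W partial_eqI[OF d1] that
    by (simp add: numeral_2_eq_2)
  show "has_partial (partial j (partial k (qfun f))) i x
      (dint (\<lambda>\<mu> \<tau>. c * W k \<mu> \<tau> * W j \<mu> \<tau> * W i \<mu> \<tau> * (deriv ^^ 3) f (mix \<mu> \<tau> x)))"
    if "\<And>m. x$m \<in> {b<..<a}"
    using step[where P="\<lambda>\<mu> \<tau>. c * W k \<mu> \<tau> * W j \<mu> \<tau>" and \<Phi>="partial j (partial k (qfun f))" and j=i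
        and n=2] cont_W partial_eqI[OF d2] that
    by (simp add: numeral_3_eq_3)
qed

theorem lemma5p3:
  fixes \<nu> a b :: real and f :: "real \<Rightarrow> real" and uh :: real
  assumes "a + \<nu> > b + \<nu>" and "b + \<nu> > 0"
    and smooth: "\<And>n x. x \<in> {b<..<a} \<Longrightarrow> ((deriv ^^ n) f) differentiable (at x)"
    and decr: "\<And>x y. x \<in> {b<..<a} \<Longrightarrow> y \<in> {b<..<a} \<Longrightarrow> x \<le> y \<Longrightarrow> f y \<le> f x"
    and "uh \<in> {b<..<a}" and "f uh = 0" and "deriv f uh = 0" and "(deriv ^^ 2) f uh = 0"
    and "\<And>u. u \<in> {b<..<a} \<Longrightarrow> (deriv ^^ 3) f u < 0"
  shows "\<forall>x. (\<forall>m. x $ m \<in> {b<..<a}) \<longrightarrow>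
     (\<forall>k. \<exists>D. has_partial (qfun f) k x D) \<and>
     (\<forall>j k. \<exists>D. has_partial (partial k (qfun f)) j x D) \<and>
     (\<forall>i j k. \<exists>D. has_partial (partial j (partial k (qfun f))) i x D \<and> D < 0)"
proof (intro allI impI)
  fix x :: "real^3" assume "\<forall>m. x $ m \<in> {b<..<a}"
  then have x: "\<And>m. x $ m \<in> {b<..<a}" by blast
  have f3_cont: "continuous_on {b<..<a} ((deriv ^^ 3) f)"
    using smooth by (intro continuous_at_imp_continuous_on ballI differentiable_imp_continuous_within)
  have "dint (\<lambda>\<mu> \<tau>. 1 / (2 * sqrt 2 * pi) * mix \<mu> \<tau> (axis k 1) * mix \<mu> \<tau> (axis j 1) *
      mix \<mu> \<tau> (axis i 1) * (deriv ^^ 3) f (mix \<mu> \<tau> x)) < 0" for i j k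
    by (rule dint_mix_axis_neg[OF _ f3_cont assms(9) x]) simp
  then show "(\<forall>k. \<exists>D. has_partial (qfun f) k x D) \<and>
     (\<forall>j k. \<exists>D. has_partial (partial k (qfun f)) j x D) \<and>
     (\<forall>i j k. \<exists>D. has_partial (partial j (partial k (qfun f))) i x D \<and> D < 0)"
    using qfun_partials[OF smooth x] by blast
qed

end
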